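(* Let $q>1$ and let $\Pi,\Pi'\sim\mathrm{Mallows}(\mathbb{N},1/q)$ be independent. Define $T_1:=\inf\{j\ge1:\Pi([j])=\Pi'([j])=[j]\}$, where $[j]=\{1,\dots,j\}$. Then $\mathbb{E}\,T_1^2<\infty$.
   Context: For $0<p<1$, $\Pi\sim\mathrm{Mallows}(\mathbb{N},p)$ is the random injection $\mathbb{N}\to\mathbb{N}$ constructed as follows: let $Z_1,Z_2,\dots$ be i.i.d. geometric with $\mathbb{P}(Z_i=k)=(1-p)p^{k-1}$, $k\ge1$; set $\Pi(1)=Z_1$ and, for $i>1$, let $\Pi(i)$ be the $Z_i$-th smallest element of $\mathbb{N}\setminus\{\Pi(1),\dots,\Pi(i-1)\}$. *)

theory Defs
  imports "HOL-Probability.Probability"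
begin

text \<open>Law of a single Z_i: P(Z = k) = (1-p) p^(k-1) for k \<ge> 1
  (the library geometric_pmf r has pmf n = (1-r)^n r on n \<ge> 0).\<close>
definition mallows_Z_pmf :: "real \<Rightarrow> nat pmf" where
  "mallows_Z_pmf p = map_pmf Suc (geometric_pmf (1 - p))"

text \<open>Given z (only z 1, z 2, ... are used), the list [Pi(1), ..., Pi(n)]:
  Pi(i) is the z(i)-th smallest element of {1,2,...} minus {Pi(1),...,Pi(i-1)}.
  enumerate S k is the (k+1)-th smallest element of the infinite set S.\<close>
fun mallows_prefix :: "(nat \<Rightarrow> nat) \<Rightarrow> nat \<Rightarrow> nat list" where
  "mallows_prefix z 0 = []"
| "mallows_prefix z (Suc n) =
     (let xs = mallows_prefix z n
      in xs @ [enumerate ({1..} - set xs) (z (Suc n) - 1)])"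

text \<open>The injection Pi : {1,2,...} \<rightarrow> {1,2,...} (value at 0 is irrelevant).\<close>
definition mallows_map :: "(nat \<Rightarrow> nat) \<Rightarrow> nat \<Rightarrow> nat" where
  "mallows_map z i = last (mallows_prefix z i)"

text \<open>Mallows(N,p) is the law of mallows_map z where z has i.i.d. coordinates
  with law mallows_Z_pmf p; we work on the sequence space directly.\<close>
definition mallows_seq_space :: "real \<Rightarrow> (nat \<Rightarrow> nat) measure" where
  "mallows_seq_space p = PiM UNIV (\<lambda>_::nat. measure_pmf (mallows_Z_pmf p))"

definition first_joint_block :: "(nat \<Rightarrow> nat) \<Rightarrow> (nat \<Rightarrow> nat) \<Rightarrow> ennreal" where
  "first_joint_block \<pi> \<pi>' =
     (if \<exists>j\<ge>1. \<pi> ` {1..j} = {1..j} \<and> \<pi>' ` {1..j} = {1..j}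
      then of_nat (LEAST j. j \<ge> 1 \<and> \<pi> ` {1..j} = {1..j} \<and> \<pi>' ` {1..j} = {1..j})
      else \<infinity>)"

end

theory Submission
  imports Defs
begin

text \<open>Write p = 1/q and z for the i.i.d. geometric choices. If z i \<le> j - i + 1 for all
  i \<le> j, then the Mallows map permutes {1..j}. Cut {1..m^2} into m consecutive blocks of
  length m. Unless some z i with i \<le> m^2 exceeds m (probability at most m^2 p^m), the
  staircase condition on block k alone forces both maps to permute {1..km}. The blocks
  are independent and each meets its condition with probability at least
  c = exp (-1/(1-p)^2), so P(T_1 > m^2) \<le> 2 m^2 p^m + (1 - c^2)^m. Summing these tails
  with weights (m+1)^4 - m^4 bounds E T_1^2.\<close>

section \<open>Prefixes of the Mallows map\<close>

lemma enumerate_le_if_less_card: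
  fixes S :: "nat set"
  assumes inf: "infinite S" and less: "k < card (S \<inter> {..M})"
  shows "enumerate S k \<le> M"
proof (rule ccontr)
  assume "\<not> enumerate S k \<le> M"
  have "S \<inter> {..M} \<subseteq> enumerate S ` {..<k}"
  proof
    fix s assume s: "s \<in> S \<inter> {..M}"
    then obtain i where i: "s = enumerate S i" using range_enumerate[OF inf] by blast
    have "i < k"
    proof (rule ccontr)
      assume "\<not> i < k"
      hence "enumerate S k \<le> enumerate S i" using inf by simp
      thus False using s i \<open>\<not> enumerate S k \<le> M\<close> by auto
    qed
    thus "s \<in> enumerate S ` {..<k}" using i by auto
  qed
  hence "card (S \<inter> {..M}) \<le> card (enumerate S ` {..<k})" by (intro card_mono) auto
  also have "\<dots> \<le> k" using card_image_le[of "{..<k}" "enumerate S"] by simp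
  finally show False using less by simp
qed

lemma enumerate_Diff_le:
  fixes A :: "nat set"
  assumes A: "A \<subseteq> {1..N}"
  shows "enumerate ({1..} - A) k \<le> max N (card A + k + 1)"
proof (rule enumerate_le_if_less_card)
  let ?M = "max N (card A + k + 1)"
  have fin: "finite A" using A finite_subset by blast
  show "infinite ({1..} - A)" using fin by (simp add: infinite_Ici)
  have AM: "A \<subseteq> {1..?M}" using A by (auto simp: le_max_iff_disj)
  have "({1..} - A) \<inter> {..?M} = {1..?M} - A" by auto
  moreover have "card ({1..?M} - A) = ?M - card A"
    using fin AM by (subst card_Diff_subset) auto
  ultimately show "k < card (({1..} - A) \<inter> {..?M})" by simp
qed

text \<open>How far the first n values of the Mallows map can exceed n (mallows_prefix_invariant).\<close>
fun mallows_overshoot :: "(nat \<Rightarrow> nat) \<Rightarrow> nat \<Rightarrow> nat" where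
  "mallows_overshoot z 0 = 0"
| "mallows_overshoot z (Suc n) = max (mallows_overshoot z n - 1) (z (Suc n) - 1)"

lemma mallows_prefix_invariant:
  "length (mallows_prefix z n) = n \<and> distinct (mallows_prefix z n) \<and>
   set (mallows_prefix z n) \<subseteq> {1..n + mallows_overshoot z n}"
proof (induction n)
  case 0
  show ?case by simp
next
  case (Suc n)
  let ?xs = "mallows_prefix z n"
  let ?y = "enumerate ({1..} - set ?xs) (z (Suc n) - 1)"
  let ?N = "Suc n + mallows_overshoot z (Suc n)"
  have "infinite ({1..} - set ?xs)" by (simp add: infinite_Ici)
  hence y_new: "?y \<in> {1..} - set ?xs" by (rule enumerate_in_set)
  have "card (set ?xs) = n" using Suc.IH by (simp add: distinct_card)
  hence "?y \<le> max (n + mallows_overshoot z n) (n + (z (Suc n) - 1) + 1)"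
    using enumerate_Diff_le[of "set ?xs"] Suc.IH by metis
  hence "?y \<le> ?N" by (cases "mallows_overshoot z n") (auto simp: max_def)
  moreover have "n + mallows_overshoot z n \<le> ?N"
    by (cases "mallows_overshoot z n") (auto simp: max_def)
  ultimately have "set (?xs @ [?y]) \<subseteq> {1..?N}" using Suc.IH y_new by auto
  moreover have "mallows_prefix z (Suc n) = ?xs @ [?y]" by (simp add: Let_def)
  ultimately show ?case using Suc.IH y_new by simp
qed

lemma mallows_map_image: "mallows_map z ` {1..j} = set (mallows_prefix z j)"
proof (induction j)
  case (Suc j)
  have "{1..Suc j} = insert (Suc j) {1..j}" by auto
  thus ?case using Suc by (auto simp: mallows_map_def Let_def)
qed simp

text \<open>If z i \<le> j - i + 1, the i-th choice is among the j - i + 1 smallest unused values, which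
  lie in {1..j} as long as the earlier choices did; so below_staircase j {1..j} z forces
  the Mallows map to permute {1..j}.\<close>
definition below_staircase :: "nat \<Rightarrow> nat set \<Rightarrow> (nat \<Rightarrow> nat) \<Rightarrow> bool" where
  "below_staircase j I z \<longleftrightarrow> (\<forall>i\<in>I. z i \<le> j - i + 1)"

lemma mallows_overshoot_le:
  assumes "below_staircase j {1..j} z" "n \<le> j"
  shows "mallows_overshoot z n \<le> j - n"
  using assms(2)
proof (induction n)
  case (Suc n)
  have "z (Suc n) \<le> j - Suc n + 1" using assms(1) Suc.prems by (auto simp: below_staircase_def)
  thus ?case using Suc by (simp only: mallows_overshoot.simps max.bounded_iff) linarith
qed simp

lemma mallows_map_image_eq_if_below_staircase:
  assumes "below_staircase j {1..j} z"
  shows "mallows_map z ` {1..j} = {1..j}"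
proof -
  have "mallows_overshoot z j = 0" using mallows_overshoot_le[OF assms, of j] by simp
  hence "set (mallows_prefix z j) \<subseteq> {1..j}" "card (set (mallows_prefix z j)) = j"
    using mallows_prefix_invariant[of z j] by (simp_all add: distinct_card)
  hence "set (mallows_prefix z j) = {1..j}" by (intro card_subset_eq) simp_all
  thus ?thesis by (simp only: mallows_map_image)
qed

lemma first_joint_block_le:
  assumes "j \<ge> 1" "mallows_map z ` {1..j} = {1..j}" "mallows_map z' ` {1..j} = {1..j}"
  shows "first_joint_block (mallows_map z) (mallows_map z') \<le> of_nat j"
proof -
  let ?P = "\<lambda>j. j \<ge> 1 \<and> mallows_map z ` {1..j} = {1..j} \<and> mallows_map z' ` {1..j} = {1..j}"
  have "?P j" using assms by blast
  hence "first_joint_block (mallows_map z) (mallows_map z') = of_nat (LEAST j. ?P j)"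
    unfolding first_joint_block_def by auto
  also have "\<dots> \<le> of_nat j" using Least_le[of ?P, OF \<open>?P j\<close>] by simp
  finally show ?thesis .
qed

section \<open>The product measure of the choices\<close>

lemma indep_vars_PiM_coordinates:
  assumes "prob_space M"
  shows "prob_space.indep_vars (PiM UNIV (\<lambda>_::'i. M)) (\<lambda>_. M) (\<lambda>i \<omega>. \<omega> i) UNIV"
proof -
  interpret P: product_prob_space "\<lambda>_::'i. M" UNIV
    by (rule product_prob_spaceI) (rule assms)
  have "distr (PiM UNIV (\<lambda>_. M)) (PiM UNIV (\<lambda>_. M)) (\<lambda>x. \<lambda>i\<in>UNIV. x i) = PiM UNIV (\<lambda>_. M)"
    by (rule trans[OF distr_cong[OF refl refl, of _ _ "\<lambda>x. x"]]) (auto simp: restrict_def)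
  also have "\<dots> = PiM UNIV (\<lambda>i. distr (PiM UNIV (\<lambda>_. M)) M (\<lambda>x :: 'i \<Rightarrow> 'a. x i))"
    using distr_PiM_component[of "UNIV :: 'i set" "\<lambda>_. M"] assms by (intro PiM_cong) auto
  finally show ?thesis
    by (subst P.indep_vars_iff_distr_eq_PiM) (auto intro: measurable_component_singleton)
qed

lemma nn_integral_PiM_prod_disjoint_blocks:
  fixes f :: "'k \<Rightarrow> ('i \<Rightarrow> 'a) \<Rightarrow> ennreal"
  assumes M: "prob_space M" and K: "finite K" and disj: "disjoint_family_on J K"
    and f: "\<And>k. k \<in> K \<Longrightarrow> f k \<in> borel_measurable (PiM (J k) (\<lambda>_. M))"
  shows "(\<integral>\<^sup>+\<omega>. (\<Prod>k\<in>K. f k (restrict \<omega> (J k))) \<partial>PiM UNIV (\<lambda>_. M))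
       = (\<Prod>k\<in>K. \<integral>\<^sup>+\<omega>. f k (restrict \<omega> (J k)) \<partial>PiM UNIV (\<lambda>_. M))"
proof -
  interpret P: product_prob_space "\<lambda>_::'i. M" UNIV
    by (rule product_prob_spaceI) (rule M)
  have "P.indep_vars (\<lambda>k. PiM (J k) (\<lambda>_. M)) (\<lambda>k \<omega>. restrict (\<lambda>i. \<omega> i) (J k)) K"
    by (rule P.indep_vars_restrict[OF indep_vars_PiM_coordinates[OF M] _ disj]) auto
  hence "P.indep_vars (\<lambda>_. borel) (\<lambda>k \<omega>. f k (restrict (\<lambda>i. \<omega> i) (J k))) K"
    by (rule P.indep_vars_compose2[OF _ f])
  thus ?thesis using P.indep_vars_nn_integral[OF K] by simp
qed

lemma measure_mallows_Z_atMost: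
  assumes p: "0 < p" "p < 1"
  shows "measure (mallows_Z_pmf p) {..b} = 1 - p ^ b"
proof -
  have "Suc -` {..b} = {..<b}" by auto
  hence "measure (mallows_Z_pmf p) {..b} = measure (geometric_pmf (1 - p)) {..<b}"
    by (simp add: mallows_Z_pmf_def)
  also have "\<dots> = (\<Sum>g<b. p ^ g * (1 - p))"
    using p by (simp add: measure_measure_pmf_finite pmf_geometric)
  also have "\<dots> = 1 - p ^ b"
    using p by (simp add: sum_distrib_right[symmetric] sum_gp_strict)
  finally show ?thesis .
qed

lemma measure_mallows_Z_greaterThan:
  assumes p: "0 < p" "p < 1"
  shows "measure (mallows_Z_pmf p) {m<..} = p ^ m"
proof -
  have "{m<..} = space (measure_pmf (mallows_Z_pmf p)) - {..m}" by auto
  thus ?thesis using measure_pmf.prob_compl[of "{..m}"] measure_mallows_Z_atMost[OF p] by simp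
qed

lemma space_mallows_seq_space [simp]: "space (mallows_seq_space p) = UNIV"
  by (simp add: mallows_seq_space_def space_PiM)

lemma prob_space_mallows_seq_space: "prob_space (mallows_seq_space p)"
  unfolding mallows_seq_space_def by (intro prob_space_PiM prob_space_measure_pmf)

lemma sets_mallows_seq_space_Collect:
  assumes "Measurable.pred (mallows_seq_space p) P"
  shows "{z. P z} \<in> sets (mallows_seq_space p)"
proof -
  have "{z\<in>space (mallows_seq_space p). P z} \<in> sets (mallows_seq_space p)" using assms by measurable
  thus ?thesis by simp
qed

lemma product_prob_space_mallows: "product_prob_space (\<lambda>_. measure_pmf (mallows_Z_pmf p))"
  by (rule product_prob_spaceI) (rule prob_space_measure_pmf)

lemma emeasure_mallows_box:
  assumes p: "0 < p" "p < 1" and J: "finite J"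
  shows "emeasure (mallows_seq_space p) {z. \<forall>i\<in>J. z i \<le> b i} = ennreal (\<Prod>i\<in>J. 1 - p ^ b i)"
proof -
  interpret P: product_prob_space "\<lambda>_. measure_pmf (mallows_Z_pmf p)" UNIV
    by (rule product_prob_space_mallows)
  have "emeasure (mallows_seq_space p) {z. \<forall>i\<in>J. z i \<le> b i}
     = emeasure (PiM UNIV (\<lambda>_. measure_pmf (mallows_Z_pmf p)))
         {x\<in>space (PiM UNIV (\<lambda>_. measure_pmf (mallows_Z_pmf p))). \<forall>i\<in>J. x i \<in> {..b i}}"
    by (simp add: mallows_seq_space_def space_PiM)
  also have "\<dots> = (\<Prod>i\<in>J. ennreal (1 - p ^ b i))"
    using J by (subst P.emeasure_PiM_Collect)
      (auto simp: measure_pmf.emeasure_eq_measure measure_mallows_Z_atMost[OF p])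
  also have "\<dots> = ennreal (\<Prod>i\<in>J. 1 - p ^ b i)"
    using p by (intro prod_ennreal) (simp add: power_le_one)
  finally show ?thesis .
qed

lemma emeasure_mallows_coordinate_greater:
  assumes p: "0 < p" "p < 1"
  shows "emeasure (mallows_seq_space p) {z. m < z i} = ennreal (p ^ m)"
proof -
  interpret P: product_prob_space "\<lambda>_. measure_pmf (mallows_Z_pmf p)" UNIV
    by (rule product_prob_space_mallows)
  have "emeasure (mallows_seq_space p) {z. m < z i}
     = emeasure (PiM UNIV (\<lambda>_. measure_pmf (mallows_Z_pmf p)))
         {x\<in>space (PiM UNIV (\<lambda>_. measure_pmf (mallows_Z_pmf p))). x i \<in> {m<..}}"
    by (simp add: mallows_seq_space_def space_PiM)
  also have "\<dots> = ennreal (p ^ m)"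
    by (subst P.emeasure_PiM_Collect_single)
      (auto simp: measure_pmf.emeasure_eq_measure measure_mallows_Z_greaterThan[OF p])
  finally show ?thesis .
qed

lemma emeasure_mallows_exists_greater_le:
  assumes p: "0 < p" "p < 1" and I: "finite I"
  shows "emeasure (mallows_seq_space p) {z. \<exists>i\<in>I. m < z i} \<le> of_nat (card I) * ennreal (p ^ m)"
proof -
  have "{z. m < z i} \<in> sets (mallows_seq_space p)" for i
    by (intro sets_mallows_seq_space_Collect, unfold mallows_seq_space_def) measurable
  moreover have "{z. \<exists>i\<in>I. m < z i} = (\<Union>i\<in>I. {z. m < z i})" by auto
  ultimately have "emeasure (mallows_seq_space p) {z. \<exists>i\<in>I. m < z i}
      \<le> (\<Sum>i\<in>I. emeasure (mallows_seq_space p) {z. m < z i})"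
    using I by (simp only:) (intro emeasure_subadditive_finite; auto)
  thus ?thesis using emeasure_mallows_coordinate_greater[OF p] by simp
qed

lemma nn_integral_mallows_box_weight:
  assumes p: "0 < p" "p < 1" and J: "finite J" and a: "a \<ge> 0"
  shows "(\<integral>\<^sup>+z. (if \<forall>i\<in>J. z i \<le> b i then ennreal a else 1) \<partial>mallows_seq_space p)
       = ennreal (a * (\<Prod>i\<in>J. 1 - p ^ b i) + (1 - (\<Prod>i\<in>J. 1 - p ^ b i)))"
proof -
  interpret S: prob_space "mallows_seq_space p" by (rule prob_space_mallows_seq_space)
  let ?E = "{z. \<forall>i\<in>J. z i \<le> b i}"
  let ?P = "\<Prod>i\<in>J. 1 - p ^ b i"
  have E: "?E \<in> sets (mallows_seq_space p)"
    using J by (intro sets_mallows_seq_space_Collect, unfold mallows_seq_space_def) measurable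
  have P0: "0 \<le> ?P" using p by (intro prod_nonneg) (simp add: power_le_one)
  have P1: "?P \<le> 1" using p by (intro prod_le_1) (auto simp: power_le_one)
  have prob_E: "S.prob ?E = ?P"
    using emeasure_mallows_box[OF p J, of b] P0 by (simp add: S.emeasure_eq_measure)
  hence prob_compl: "S.prob (UNIV - ?E) = 1 - ?P"
    using S.prob_compl[OF E] by simp
  have "(\<lambda>z. if \<forall>i\<in>J. z i \<le> b i then ennreal a else 1)
      = (\<lambda>z. ennreal a * indicator ?E z + indicator (UNIV - ?E) z)"
    by (auto simp: fun_eq_iff indicator_def)
  hence "(\<integral>\<^sup>+z. (if \<forall>i\<in>J. z i \<le> b i then ennreal a else 1) \<partial>mallows_seq_space p)
      = ennreal a * emeasure (mallows_seq_space p) ?E + emeasure (mallows_seq_space p) (UNIV - ?E)"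
    using E sets.compl_sets[OF E] by (simp add: nn_integral_add nn_integral_cmult_indicator)
  also have "\<dots> = ennreal (a * ?P + (1 - ?P))"
    using prob_E prob_compl a P0 P1 by (simp add: S.emeasure_eq_measure ennreal_mult ennreal_plus)
  finally show ?thesis .
qed

lemma nn_integral_mallows_prod_box_weights:
  assumes p: "0 < p" "p < 1" and K: "finite K" and disj: "disjoint_family_on J K"
    and J: "\<And>k. k \<in> K \<Longrightarrow> finite (J k)" and a: "\<And>k. k \<in> K \<Longrightarrow> a k \<ge> 0"
  shows "(\<integral>\<^sup>+z. (\<Prod>k\<in>K. if \<forall>i\<in>J k. z i \<le> b k i then ennreal (a k) else 1) \<partial>mallows_seq_space p)
       = (\<Prod>k\<in>K. ennreal (a k * (\<Prod>i\<in>J k. 1 - p ^ b k i) + (1 - (\<Prod>i\<in>J k. 1 - p ^ b k i))))"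
proof -
  define f where "f k x = (if \<forall>i\<in>J k. x i \<le> b k i then ennreal (a k) else 1)"
    for k and x :: "nat \<Rightarrow> nat"
  have restrict: "f k (restrict z (J k)) = (if \<forall>i\<in>J k. z i \<le> b k i then ennreal (a k) else 1)" for k z
    by (simp add: f_def)
  have "f k \<in> borel_measurable (PiM (J k) (\<lambda>_. measure_pmf (mallows_Z_pmf p)))" if "k \<in> K" for k
    using J[OF that] unfolding f_def by measurable
  hence "(\<integral>\<^sup>+z. (\<Prod>k\<in>K. f k (restrict z (J k))) \<partial>mallows_seq_space p)
      = (\<Prod>k\<in>K. \<integral>\<^sup>+z. f k (restrict z (J k)) \<partial>mallows_seq_space p)"
    unfolding mallows_seq_space_def
    by (rule nn_integral_PiM_prod_disjoint_blocks[OF prob_space_measure_pmf K disj])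
  thus ?thesis
    using nn_integral_mallows_box_weight[OF p J a] by (simp add: restrict)
qed

section \<open>Elementary estimates\<close>

lemma summable_poly_times_geometric:
  fixes \<rho> :: real
  assumes \<rho>: "0 \<le> \<rho>" "\<rho> < 1"
  shows "summable (\<lambda>n. real (Suc n) ^ k * \<rho> ^ n)"
proof (cases "k = 0")
  case True
  thus ?thesis using \<rho> by simp
next
  case False
  define \<tau> where "\<tau> = root (2 * k) \<rho>"
  have \<tau>: "0 \<le> \<tau>" "\<tau> < 1" "\<tau> ^ (2 * k) = \<rho>"
    unfolding \<tau>_def using \<rho> False by (simp_all add: real_root_ge_zero real_root_pow_pos2)
  have split: "real (Suc n) ^ k * \<rho> ^ n = (real (Suc n) * \<tau> ^ n) ^ k * (\<tau> ^ k) ^ n" for n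
  proof -
    have "\<rho> ^ n = \<tau> ^ (k * n + k * n)" by (simp flip: \<tau>(3) power_mult add: mult_2 add_mult_distrib)
    thus ?thesis by (simp add: power_add power_mult_distrib flip: power_mult) (simp add: mult.commute)
  qed
  have "(\<lambda>n. of_nat n * \<tau> ^ n + \<tau> ^ n) \<longlonglongrightarrow> 0 + 0"
    using powser_times_n_limit_0[of \<tau>] \<tau> by (intro tendsto_add LIMSEQ_power_zero) simp_all
  hence "(\<lambda>n. real (Suc n) * \<tau> ^ n) \<longlonglongrightarrow> 0" by (simp add: algebra_simps)
  hence "(\<lambda>n. (real (Suc n) * \<tau> ^ n) ^ k) \<longlonglongrightarrow> 0"
    using tendsto_power[of _ 0 _ k] False by (simp add: zero_power)
  hence "eventually (\<lambda>n. (real (Suc n) * \<tau> ^ n) ^ k < 1) sequentially"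
    by (rule order_tendstoD(2)) simp
  hence "eventually (\<lambda>n. norm (real (Suc n) ^ k * \<rho> ^ n) \<le> (\<tau> ^ k) ^ n) sequentially"
  proof eventually_elim
    case (elim n)
    have "norm (real (Suc n) ^ k * \<rho> ^ n) = (real (Suc n) * \<tau> ^ n) ^ k * (\<tau> ^ k) ^ n"
      using split[of n] \<rho> \<tau> by simp
    also have "\<dots> \<le> (\<tau> ^ k) ^ n" using elim \<tau> by (intro mult_left_le_one_le) auto
    finally show ?case .
  qed
  moreover have "summable (\<lambda>n. (\<tau> ^ k) ^ n)"
    using \<tau> False by (intro summable_geometric) (simp add: power_less_one_iff abs_of_nonneg)
  ultimately show ?thesis by (rule summable_comparison_test_ev)
qed

lemma exp_le_one_minus:
  fixes p x :: real
  assumes "0 \<le> x" "x \<le> p" "p < 1"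
  shows "exp (- x / (1 - p)) \<le> 1 - x"
proof -
  define y where "y = x / (1 - x)"
  have x1: "x < 1" "0 \<le> y" unfolding y_def using assms by simp_all
  have "exp (- x / (1 - p)) \<le> exp (- y)"
    unfolding y_def using assms x1 by (simp add: divide_left_mono)
  also have "\<dots> = 1 / exp y" by (simp add: exp_minus field_simps)
  also have "\<dots> \<le> 1 / (1 + y)" using x1 exp_ge_add_one_self[of y] by (intro divide_left_mono) auto
  also have "1 / (1 + y) = 1 - x" unfolding y_def using x1 by (simp add: field_simps)
  finally show ?thesis .
qed

lemma prod_one_minus_distinct_powers_ge:
  fixes p :: real and b :: "'i \<Rightarrow> nat"
  assumes p: "0 < p" "p < 1" and J: "finite J" and inj: "inj_on b J"
    and b1: "\<And>i. i \<in> J \<Longrightarrow> b i \<ge> 1"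
  shows "exp (- 1 / (1 - p)^2) \<le> (\<Prod>i\<in>J. 1 - p ^ b i)"
proof -
  obtain N where N: "b ` J \<subseteq> {..<N}"
    using J by (metis finite_imageI finite_nat_iff_bounded)
  have "(\<Sum>i\<in>J. p ^ b i) = (\<Sum>s\<in>b ` J. p ^ s)" using inj by (simp add: sum.reindex)
  also have "\<dots> \<le> (\<Sum>s<N. p ^ s)" using N p by (intro sum_mono2) auto
  also have "\<dots> = (1 - p ^ N) / (1 - p)" using p by (simp add: sum_gp_strict)
  also have "\<dots> \<le> 1 / (1 - p)" using p by (intro divide_right_mono) auto
  finally have "(\<Sum>i\<in>J. p ^ b i) / (1 - p) \<le> 1 / (1 - p) / (1 - p)"
    using p by (intro divide_right_mono) auto
  hence "exp (- 1 / (1 - p)^2) \<le> exp (\<Sum>i\<in>J. - (p ^ b i) / (1 - p))"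
    by (simp add: sum_divide_distrib sum_negf power2_eq_square)
  also have "\<dots> = (\<Prod>i\<in>J. exp (- (p ^ b i) / (1 - p)))" by (rule exp_sum[OF J])
  also have "\<dots> \<le> (\<Prod>i\<in>J. 1 - p ^ b i)"
  proof (intro prod_mono conjI)
    fix i assume i: "i \<in> J"
    have "p ^ b i \<le> p ^ 1" using p b1[OF i] by (intro power_decreasing) auto
    thus "exp (- (p ^ b i) / (1 - p)) \<le> 1 - p ^ b i" using p by (intro exp_le_one_minus) auto
  qed simp
  finally show ?thesis .
qed

lemma sum_Suc_power_diff:
  assumes "k > 0"
  shows "(\<Sum>m<N. Suc m ^ k - m ^ k) = N ^ k"
proof (induction N)
  case (Suc N)
  have "N ^ k \<le> Suc N ^ k" by (rule power_mono) auto
  thus ?case using Suc by simp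
qed (use assms in simp)

lemma ennreal_square_le_suminf:
  fixes t :: ennreal
  assumes g: "\<And>m. of_nat (m^2) < t \<Longrightarrow> 1 \<le> g m"
  shows "t^2 \<le> (\<Sum>m. of_nat (Suc m ^ 4 - m ^ 4) * g m)"
proof -
  let ?S = "\<Sum>m. of_nat (Suc m ^ 4 - m ^ 4) * g m"
  have partial: "of_nat (N^4) \<le> ?S" if below: "\<And>m. m < N \<Longrightarrow> of_nat (m^2) < t" for N
  proof -
    have "(of_nat (N^4) :: ennreal) = (\<Sum>m<N. of_nat (Suc m ^ 4 - m ^ 4))"
      using sum_Suc_power_diff[of 4 N] by (metis of_nat_sum zero_less_numeral)
    also have "\<dots> \<le> (\<Sum>m<N. of_nat (Suc m ^ 4 - m ^ 4) * g m)"
    proof (intro sum_mono)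
      fix m assume "m \<in> {..<N}"
      hence "1 \<le> g m" using g below by blast
      thus "of_nat (Suc m ^ 4 - m ^ 4) \<le> of_nat (Suc m ^ 4 - m ^ 4) * g m"
        using mult_left_mono[of 1 "g m"] by fastforce
    qed
    also have "\<dots> \<le> ?S" by (intro sum_le_suminf) auto
    finally show ?thesis .
  qed
  show ?thesis
  proof (cases "t = \<top>")
    case True
    have "of_nat N \<le> ?S" for N
    proof -
      have "N \<le> N^4" by (cases "N = 0") (simp_all add: self_le_power)
      hence "(of_nat N :: ennreal) \<le> of_nat (N^4)" by (rule of_nat_mono)
      also have "\<dots> \<le> ?S" using True by (intro partial) (simp only: of_nat_less_top)
      finally show ?thesis .
    qed
    hence "?S = \<top>" by (metis ennreal_Ex_less_of_nat top.not_eq_extremum leD)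
    thus ?thesis by simp
  next
    case False
    then obtain n where "t \<le> of_nat n" using ennreal_Ex_less_of_nat less_imp_le
      by (metis top.not_eq_extremum)
    have "(of_nat n :: ennreal) \<le> of_nat (n^2)" by (intro of_nat_mono) (simp add: power2_eq_square le_square)
    hence ex: "t \<le> of_nat (n^2)" using \<open>t \<le> of_nat n\<close> by (rule order_trans[rotated])
    define N where "N = (LEAST N. t \<le> of_nat (N^2))"
    have "t \<le> of_nat (N^2)" unfolding N_def by (rule LeastI[of _ n]) (rule ex)
    hence "t^2 \<le> of_nat (N^4)" using power_mono[of t "of_nat (N^2)" 2] by (simp flip: power_mult)
    also have "\<dots> \<le> ?S"
      by (rule partial) (metis N_def not_less_Least not_le)
    finally show ?thesis .
  qed
qed

section \<open>The block argument\<close>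

definition block :: "nat \<Rightarrow> nat \<Rightarrow> nat set" where
  "block m k = {(k - 1) * m + 1..k * m}"

definition has_large_choice :: "nat \<Rightarrow> (nat \<Rightarrow> nat) \<Rightarrow> bool" where
  "has_large_choice m z \<longleftrightarrow> (\<exists>i\<in>{1..m^2}. m < z i)"

lemma disjoint_family_on_block: "disjoint_family_on (block m) K"
proof -
  have "i \<notin> block m l" if "k < l" "i \<in> block m k" for k l i
  proof -
    have "k * m \<le> (l - 1) * m" using \<open>k < l\<close> by (intro mult_le_mono1) simp
    thus ?thesis using that(2) unfolding block_def atLeastAtMost_iff by linarith
  qed
  thus ?thesis unfolding disjoint_family_on_def by (metis disjoint_iff linorder_neqE_nat)
qed

text \<open>Without a large choice, the coordinates before block k are at most m, hence below
  the staircase of height km; only the block itself needs checking.\<close>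
lemma below_staircase_if_block:
  assumes "\<not> has_large_choice m z" "k \<in> {1..m}" "below_staircase (k * m) (block m k) z"
  shows "below_staircase (k * m) {1..k * m} z"
  unfolding below_staircase_def
proof
  fix i assume i: "i \<in> {1..k * m}"
  have km: "(k - 1) * m + m = k * m" "k * m \<le> m^2"
    using assms(2) by (auto simp: power2_eq_square le_diff_conv2 algebra_simps dest: gr0_implies_Suc)
  show "z i \<le> k * m - i + 1"
  proof (cases "i \<le> (k - 1) * m")
    case True
    hence "i \<in> {1..m^2}" using i km by simp
    hence "z i \<le> m" using assms(1) unfolding has_large_choice_def by (simp add: not_less)
    thus ?thesis using True km by linarith
  next
    case False
    thus ?thesis using assms(3) i unfolding below_staircase_def block_def by auto
  qed
qed

lemma first_joint_block_le_square:
  assumes "\<not> has_large_choice m z" "\<not> has_large_choice m z'" "k \<in> {1..m}"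
    and "below_staircase (k * m) (block m k) z" "below_staircase (k * m) (block m k) z'"
  shows "first_joint_block (mallows_map z) (mallows_map z') \<le> of_nat (m^2)"
proof -
  have "first_joint_block (mallows_map z) (mallows_map z') \<le> of_nat (k * m)"
    using assms by (intro first_joint_block_le mallows_map_image_eq_if_below_staircase
        below_staircase_if_block) auto
  also have "\<dots> \<le> of_nat (m^2)"
    using assms(3) by (intro of_nat_mono) (simp add: power2_eq_square mult_le_mono1)
  finally show ?thesis .
qed

definition block_prob :: "real \<Rightarrow> nat \<Rightarrow> nat \<Rightarrow> real" where
  "block_prob p m k = (\<Prod>i\<in>block m k. 1 - p ^ (k * m - i + 1))"

lemma block_prob_bounds:
  assumes p: "0 < p" "p < 1"
  shows "exp (- 1 / (1 - p)^2) \<le> block_prob p m k" "block_prob p m k \<le> 1"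
proof -
  have inj: "inj_on (\<lambda>i. k * m - i + 1) (block m k)"
    by (rule inj_onI) (auto simp: block_def)
  show "exp (- 1 / (1 - p)^2) \<le> block_prob p m k"
    unfolding block_prob_def
    by (rule prod_one_minus_distinct_powers_ge[OF p _ inj]) (auto simp: block_def)
  show "block_prob p m k \<le> 1"
    unfolding block_prob_def using p by (intro prod_le_1) (simp_all add: power_le_one mult_le_one)
qed

lemma nn_integral_no_joint_block:
  assumes p: "0 < p" "p < 1"
  shows "(\<integral>\<^sup>+\<omega>. (\<Prod>k\<in>{1..m}. if below_staircase (k * m) (block m k) (fst \<omega>)
                  \<and> below_staircase (k * m) (block m k) (snd \<omega>) then 0 else 1)
            \<partial>(mallows_seq_space p \<Otimes>\<^sub>M mallows_seq_space p))
       = (\<Prod>k\<in>{1..m}. ennreal (1 - (block_prob p m k)^2))"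
proof -
  interpret S: prob_space "mallows_seq_space p" by (rule prob_space_mallows_seq_space)
  let ?A = "\<lambda>k z. below_staircase (k * m) (block m k) z"
  let ?b = "\<lambda>k i. k * m - i + 1"
  have fin: "\<And>k. finite (block m k)" by (simp add: block_def)
  have box: "?A k z \<longleftrightarrow> (\<forall>i\<in>block m k. z i \<le> ?b k i)" for k z
    by (simp add: below_staircase_def)
  have "(\<lambda>\<omega>. \<Prod>k\<in>{1..m}. if ?A k (fst \<omega>) \<and> ?A k (snd \<omega>) then 0 else 1 :: ennreal)
      \<in> borel_measurable (mallows_seq_space p \<Otimes>\<^sub>M mallows_seq_space p)"
    unfolding below_staircase_def block_def mallows_seq_space_def by measurable
  from S.nn_integral_fst[OF this, symmetric]
  have "(\<integral>\<^sup>+\<omega>. (\<Prod>k\<in>{1..m}. if ?A k (fst \<omega>) \<and> ?A k (snd \<omega>) then 0 else 1)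
            \<partial>(mallows_seq_space p \<Otimes>\<^sub>M mallows_seq_space p))
      = (\<integral>\<^sup>+z. \<integral>\<^sup>+z'. (\<Prod>k\<in>{1..m}. if \<forall>i\<in>block m k. z' i \<le> ?b k i
                   then ennreal (if ?A k z then 0 else 1) else 1)
            \<partial>mallows_seq_space p \<partial>mallows_seq_space p)"
    by (simp only:) (intro nn_integral_cong prod.cong refl; simp add: box)
  also have "\<dots> = (\<integral>\<^sup>+z. (\<Prod>k\<in>{1..m}. if \<forall>i\<in>block m k. z i \<le> ?b k i
                   then ennreal (1 - block_prob p m k) else 1) \<partial>mallows_seq_space p)"
    unfolding block_prob_def
    by (subst nn_integral_mallows_prod_box_weights[OF p _ disjoint_family_on_block fin])
      (auto intro!: nn_integral_cong prod.cong simp: box)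
  also have "\<dots> = (\<Prod>k\<in>{1..m}. ennreal ((1 - block_prob p m k) * block_prob p m k + (1 - block_prob p m k)))"
    unfolding block_prob_def using block_prob_bounds(2)[OF p, unfolded block_prob_def]
    by (subst nn_integral_mallows_prod_box_weights[OF p _ disjoint_family_on_block fin]) auto
  also have "\<dots> = (\<Prod>k\<in>{1..m}. ennreal (1 - (block_prob p m k)^2))"
    by (simp add: algebra_simps power2_eq_square)
  finally show ?thesis .
qed

text \<open>A measurable majorant of the indicator of T_1 > m^2, see one_le_late_cover; T_1 itself
  is never shown measurable.\<close>
definition late_cover :: "nat \<Rightarrow> (nat \<Rightarrow> nat) \<times> (nat \<Rightarrow> nat) \<Rightarrow> ennreal" where
  "late_cover m \<omega> =
     indicator {\<omega>. has_large_choice m (fst \<omega>)} \<omega> + indicator {\<omega>. has_large_choice m (snd \<omega>)} \<omega>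
     + (\<Prod>k\<in>{1..m}. if below_staircase (k * m) (block m k) (fst \<omega>)
                       \<and> below_staircase (k * m) (block m k) (snd \<omega>) then 0 else 1)"

lemma one_le_late_cover:
  assumes "of_nat (m^2) < first_joint_block (mallows_map (fst \<omega>)) (mallows_map (snd \<omega>))"
  shows "1 \<le> late_cover m \<omega>"
proof (cases "has_large_choice m (fst \<omega>) \<or> has_large_choice m (snd \<omega>)")
  case True
  thus ?thesis by (auto simp: late_cover_def)
next
  case False
  have "\<not> (below_staircase (k * m) (block m k) (fst \<omega>) \<and> below_staircase (k * m) (block m k) (snd \<omega>))"
    if "k \<in> {1..m}" for k
    using first_joint_block_le_square[of m "fst \<omega>" "snd \<omega>" k] False that assms leD by blast
  hence "(\<Prod>k\<in>{1..m}. if below_staircase (k * m) (block m k) (fst \<omega>)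
         \<and> below_staircase (k * m) (block m k) (snd \<omega>) then 0 else 1) = (1 :: ennreal)"
    by (intro prod.neutral) simp
  thus ?thesis by (simp add: late_cover_def)
qed

lemma late_cover_measurable [measurable]:
  "late_cover m \<in> borel_measurable (mallows_seq_space p \<Otimes>\<^sub>M mallows_seq_space p)"
  unfolding late_cover_def has_large_choice_def below_staircase_def block_def mallows_seq_space_def
  by measurable

lemma nn_integral_late_cover_le:
  assumes p: "0 < p" "p < 1"
  shows "(\<integral>\<^sup>+\<omega>. late_cover m \<omega> \<partial>(mallows_seq_space p \<Otimes>\<^sub>M mallows_seq_space p))
     \<le> ennreal (2 * real (m^2) * p ^ m + (1 - exp (- 1 / (1 - p)^2)^2) ^ m)"
proof -
  let ?SS = "mallows_seq_space p \<Otimes>\<^sub>M mallows_seq_space p"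
  have ind_fst: "(indicator {\<omega>. has_large_choice m (fst \<omega>)} :: _ \<Rightarrow> ennreal) \<in> borel_measurable ?SS"
    unfolding has_large_choice_def mallows_seq_space_def by measurable
  have ind_snd: "(indicator {\<omega>. has_large_choice m (snd \<omega>)} :: _ \<Rightarrow> ennreal) \<in> borel_measurable ?SS"
    unfolding has_large_choice_def mallows_seq_space_def by measurable
  have no_joint_meas: "(\<lambda>\<omega>. \<Prod>k\<in>{1..m}. if below_staircase (k * m) (block m k) (fst \<omega>)
      \<and> below_staircase (k * m) (block m k) (snd \<omega>) then 0 else 1 :: ennreal) \<in> borel_measurable ?SS"
    unfolding below_staircase_def block_def mallows_seq_space_def by measurable
  interpret S: prob_space "mallows_seq_space p" by (rule prob_space_mallows_seq_space)
  let ?L = "{z. has_large_choice m z}"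
  let ?c = "exp (- 1 / (1 - p)^2)"
  have L: "?L \<in> sets (mallows_seq_space p)"
    unfolding has_large_choice_def
    by (intro sets_mallows_seq_space_Collect, unfold mallows_seq_space_def) measurable
  have UNIV: "UNIV \<in> sets (mallows_seq_space p)" by (metis sets.top space_mallows_seq_space)
  have Times_eq_Collect_fst: "{\<omega>. has_large_choice m (fst \<omega>)} = ?L \<times> UNIV"
    and Times_eq_Collect_snd: "{\<omega>. has_large_choice m (snd \<omega>)} = UNIV \<times> ?L" by auto
  have prob_L: "emeasure (mallows_seq_space p) ?L \<le> ennreal (real (m^2) * p ^ m)"
    using emeasure_mallows_exists_greater_le[OF p, of "{1..m^2}" m] p
    by (simp add: has_large_choice_def ennreal_mult ennreal_of_nat_eq_real_of_nat)
  have no_joint: "(\<Prod>k\<in>{1..m}. ennreal (1 - (block_prob p m k)^2)) \<le> ennreal ((1 - ?c^2) ^ m)"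
  proof -
    have bounds: "0 \<le> 1 - (block_prob p m k)^2 \<and> 1 - (block_prob p m k)^2 \<le> 1 - ?c^2" for k
      using block_prob_bounds[OF p, of m k] order_trans[OF exp_ge_zero block_prob_bounds(1)[OF p]]
      by (auto intro!: power_mono power_le_one)
    hence "(\<Prod>k\<in>{1..m}. ennreal (1 - (block_prob p m k)^2))
        = ennreal (\<Prod>k\<in>{1..m}. 1 - (block_prob p m k)^2)" by (intro prod_ennreal) blast
    also have "\<dots> \<le> ennreal (\<Prod>k\<in>{1..m}. 1 - ?c^2)"
      using bounds by (intro ennreal_leI prod_mono) blast
    finally show ?thesis by simp
  qed
  have "(\<integral>\<^sup>+\<omega>. late_cover m \<omega> \<partial>?SS)
      = (\<integral>\<^sup>+\<omega>. indicator {\<omega>. has_large_choice m (fst \<omega>)} \<omega> \<partial>?SS)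
        + (\<integral>\<^sup>+\<omega>. indicator {\<omega>. has_large_choice m (snd \<omega>)} \<omega> \<partial>?SS)
        + (\<Prod>k\<in>{1..m}. ennreal (1 - (block_prob p m k)^2))"
    unfolding late_cover_def
    by (simp only: nn_integral_add[OF borel_measurable_add[OF ind_fst ind_snd] no_joint_meas]
        nn_integral_add[OF ind_fst ind_snd] nn_integral_no_joint_block[OF p])
  also have "\<dots> = emeasure ?SS (?L \<times> UNIV) + emeasure ?SS (UNIV \<times> ?L)
        + (\<Prod>k\<in>{1..m}. ennreal (1 - (block_prob p m k)^2))"
    using L UNIV by (simp only: Times_eq_Collect_fst Times_eq_Collect_snd nn_integral_indicator pair_measureI)
  also have "\<dots> = emeasure (mallows_seq_space p) ?L + emeasure (mallows_seq_space p) ?L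
        + (\<Prod>k\<in>{1..m}. ennreal (1 - (block_prob p m k)^2))"
    using L UNIV by (simp add: S.emeasure_pair_measure_Times S.emeasure_space_1[simplified])
  also have "\<dots> \<le> ennreal (real (m^2) * p ^ m) + ennreal (real (m^2) * p ^ m) + ennreal ((1 - ?c^2) ^ m)"
    by (intro add_mono prob_L no_joint)
  also have "\<dots> = ennreal (2 * real (m^2) * p ^ m + (1 - ?c^2) ^ m)"
    using p by (simp add: ennreal_plus[symmetric] power_le_one del: ennreal_plus)
  finally show ?thesis .
qed

lemma summable_late_cover_bound:
  fixes p r :: real
  assumes p: "0 \<le> p" "p < 1" and r: "0 \<le> r" "r < 1"
  shows "summable (\<lambda>m. real (Suc m ^ 4 - m ^ 4) * (2 * real (m^2) * p ^ m + r ^ m))"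
proof (rule summable_comparison_test')
  show "summable (\<lambda>m. 2 * (real (Suc m) ^ 6 * p ^ m) + real (Suc m) ^ 4 * r ^ m)"
    using summable_poly_times_geometric[OF p, of 6] summable_poly_times_geometric[OF r, of 4]
    by (intro summable_add summable_mult)
  fix m :: nat
  have "real (Suc m ^ 4 - m ^ 4) \<le> real (Suc m) ^ 4" by simp
  moreover have "real (m^2) \<le> real (Suc m) ^ 2" by simp
  ultimately have "real (Suc m ^ 4 - m ^ 4) * (2 * real (m^2) * p ^ m + r ^ m)
      \<le> real (Suc m) ^ 4 * (2 * real (Suc m) ^ 2 * p ^ m + r ^ m)"
    using p r by (intro mult_mono add_mono mult_right_mono) auto
  also have "\<dots> = 2 * (real (Suc m) ^ 6 * p ^ m) + real (Suc m) ^ 4 * r ^ m"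
    by (simp add: algebra_simps flip: power_add)
  finally show "norm (real (Suc m ^ 4 - m ^ 4) * (2 * real (m^2) * p ^ m + r ^ m))
      \<le> 2 * (real (Suc m) ^ 6 * p ^ m) + real (Suc m) ^ 4 * r ^ m"
    using p r by simp
qed

theorem nn_integral_first_joint_block_square_finite:
  assumes p: "0 < p" "p < 1"
  shows "(\<integral>\<^sup>+\<omega>. (first_joint_block (mallows_map (fst \<omega>)) (mallows_map (snd \<omega>))) ^ 2
            \<partial>(mallows_seq_space p \<Otimes>\<^sub>M mallows_seq_space p)) < \<infinity>"
proof -
  let ?SS = "mallows_seq_space p \<Otimes>\<^sub>M mallows_seq_space p"
  define r where "r = 1 - exp (- 1 / (1 - p)^2)^2"
  define bound where "bound m = real (Suc m ^ 4 - m ^ 4) * (2 * real (m^2) * p ^ m + r ^ m)" for m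
  have r: "0 \<le> r" "r < 1" unfolding r_def using p by (auto simp: power_le_one)
  have "(\<integral>\<^sup>+\<omega>. (first_joint_block (mallows_map (fst \<omega>)) (mallows_map (snd \<omega>))) ^ 2 \<partial>?SS)
      \<le> (\<integral>\<^sup>+\<omega>. (\<Sum>m. of_nat (Suc m ^ 4 - m ^ 4) * late_cover m \<omega>) \<partial>?SS)"
    by (intro nn_integral_mono ennreal_square_le_suminf one_le_late_cover)
  also have "\<dots> = (\<Sum>m. of_nat (Suc m ^ 4 - m ^ 4) * \<integral>\<^sup>+\<omega>. late_cover m \<omega> \<partial>?SS)"
    by (simp add: nn_integral_suminf nn_integral_cmult)
  also have "\<dots> \<le> (\<Sum>m. ennreal (bound m))"
  proof (intro suminf_le)
    fix m
    have "of_nat (Suc m ^ 4 - m ^ 4) * (\<integral>\<^sup>+\<omega>. late_cover m \<omega> \<partial>?SS)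
        \<le> ennreal (real (Suc m ^ 4 - m ^ 4)) * ennreal (2 * real (m^2) * p ^ m + r ^ m)"
      unfolding ennreal_of_nat_eq_real_of_nat r_def
      by (intro mult_left_mono nn_integral_late_cover_le[OF p]) simp
    also have "\<dots> = ennreal (bound m)" unfolding bound_def using p r by (simp add: ennreal_mult)
    finally show "of_nat (Suc m ^ 4 - m ^ 4) * (\<integral>\<^sup>+\<omega>. late_cover m \<omega> \<partial>?SS) \<le> ennreal (bound m)" .
  qed auto
  also have "\<dots> = ennreal (\<Sum>m. bound m)"
    using summable_late_cover_bound[of p r] p r unfolding bound_def
    by (intro suminf_ennreal2) auto
  finally show ?thesis by (rule le_less_trans) simp
qed

theorem lemma4p3:
  fixes q :: real
  assumes "q > 1"
  shows "(\<integral>\<^sup>+ \<omega>. (first_joint_block (mallows_map (fst \<omega>)) (mallows_map (snd \<omega>))) ^ 2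
            \<partial>(mallows_seq_space (1 / q) \<Otimes>\<^sub>M mallows_seq_space (1 / q))) < \<infinity>"
  using assms by (intro nn_integral_first_joint_block_square_finite) auto

end
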